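(* Let $m_1 > m_2 > \dots > m_k$ be a hierarchy of measures as in the context, and let $0 \le s < e \le 1440$ with $T = e - s$. Then the Timehash index key set $H(s,e)$ satisfies $$|H(s,e)| \le \left\lfloor \frac{T}{m_1} \right\rfloor + 1 + B, \qquad B = 2\sum_{i=2}^{k}\left(\frac{m_{i-1}}{m_i} - 1\right),$$ where $B$ depends only on the hierarchy; in particular $|H(s,e)| = O(T/m_1)$. For the hierarchy $(m_1,\dots,m_5) = (240,60,15,5,1)$ one has $B = 24$.
   Context: Time of day is measured in minutes since midnight, $\{0,1,\dots,1439\}$. A hierarchy of measures is a sequence of positive integers $m_1 > m_2 > \dots > m_k$ with $m_k = 1$, $m_i$ dividing $m_{i-1}$ for $2 \le i \le k$, and $m_1$ dividing $1440$. A level-$i$ block is a set of minutes $[a, a+m_i) = \{a, \dots, a+m_i-1\}$ with $a$ a nonnegative multiple of $m_i$ and $a + m_i \le 1440$; its key is the pair $(i,a)$. Every level-$i$ block with $i \ge 2$ is contained in a unique level-$(i-1)$ block, its parent. For a range $0 \le s < e \le 1440$ (the minutes $s,\dots,e-1$), the index key set $H(s,e)$ is the set of keys of all blocks $B$ (at any level) such that $B \subseteq [s,e)$ and either $B$ is at level 1 or the parent of $B$ is not contained in $[s,e)$ (the decomposition into complete coarsest blocks inside the range, with partially covered boundary blocks recursively refined at finer levels). *)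

theory Defs
  imports Main
begin

text \<open>A hierarchy of measures m_1 > ... > m_k is a list ms = [m_1,...,m_k];
  level i (1-based) has measure ms ! (i - 1).\<close>

definition meas :: "nat list \<Rightarrow> nat \<Rightarrow> nat" where
  "meas ms i = ms ! (i - 1)"

definition hierarchy :: "nat list \<Rightarrow> bool" where
  "hierarchy ms \<longleftrightarrow> ms \<noteq> [] \<and> (\<forall>i\<in>{1..length ms}. 0 < meas ms i)
     \<and> (\<forall>i\<in>{2..length ms}. meas ms i < meas ms (i - 1) \<and> meas ms i dvd meas ms (i - 1))
     \<and> meas ms (length ms) = 1 \<and> meas ms 1 dvd 1440"

definition is_block :: "nat list \<Rightarrow> nat \<Rightarrow> nat \<Rightarrow> bool" where
  "is_block ms i a \<longleftrightarrow> 1 \<le> i \<and> i \<le> length ms \<and> meas ms i dvd a \<and> a + meas ms i \<le> 1440"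

definition block :: "nat list \<Rightarrow> nat \<Rightarrow> nat \<Rightarrow> nat set" where
  "block ms i a = {a..<a + meas ms i}"

definition parent_start :: "nat list \<Rightarrow> nat \<Rightarrow> nat \<Rightarrow> nat" where
  "parent_start ms i a = a - a mod meas ms (i - 1)"

definition H :: "nat list \<Rightarrow> nat \<Rightarrow> nat \<Rightarrow> (nat \<times> nat) set" where
  "H ms s e = {(i, a). is_block ms i a \<and> block ms i a \<subseteq> {s..<e}
      \<and> (i = 1 \<or> \<not> block ms (i - 1) (parent_start ms i a) \<subseteq> {s..<e})}"

text \<open>B = 2 * sum_{i=2}^k (m_{i-1}/m_i - 1); the quotients are exact by divisibility.\<close>
definition Bconst :: "nat list \<Rightarrow> nat" where
  "Bconst ms = 2 * (\<Sum>i = 2..length ms. meas ms (i - 1) div meas ms i - 1)"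

end

theory Submission
  imports Defs
begin

text \<open>Aligned blocks of one size are pairwise disjoint, so at most \<open>\<lfloor>T/m\<^sub>1\<rfloor>\<close> level-1 blocks
  fit into \<open>[s,e)\<close>. A key \<open>(i,a)\<close> with \<open>i \<ge> 2\<close> lies in a parent block that meets \<open>[s,e)\<close>
  without being contained in it; such a parent must contain \<open>s\<close> or \<open>e - 1\<close>, so there are at
  most two of them per level, and each has at most \<open>m\<^sub>i\<^sub>-\<^sub>1/m\<^sub>i - 1\<close> children inside \<open>[s,e)\<close>,
  because some child meets the complement.\<close>

lemma mem_aligned_block_iff:
  fixes m a x :: nat
  assumes "0 < m" "m dvd a"
  shows "x \<in> {a..<a + m} \<longleftrightarrow> x - x mod m = a"
proof -
  obtain q where a: "a = m * q" using assms(2) by blast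
  have "x \<in> {a..<a + m} \<longleftrightarrow> x div m = q"
  proof
    assume "x \<in> {a..<a + m}"
    then show "x div m = q" unfolding a by (intro div_nat_eqI) auto
  next
    assume "x div m = q"
    then show "x \<in> {a..<a + m}"
      using div_mult_mod_eq[of x m] mod_less_divisor[OF assms(1), of x]
      unfolding a by (simp add: mult.commute)
  qed
  also have "\<dots> \<longleftrightarrow> x - x mod m = a"
    using assms(1) by (auto simp: a minus_mod_eq_mult_div)
  finally show ?thesis .
qed

lemma card_aligned_blocks_mult_le:
  fixes m :: nat and A S :: "nat set"
  assumes "0 < m" "finite S"
    and aligned: "\<And>a. a \<in> A \<Longrightarrow> m dvd a"
    and inside: "\<And>a. a \<in> A \<Longrightarrow> {a..<a + m} \<subseteq> S"
  shows "card A * m \<le> card S"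
proof -
  have "A \<subseteq> S" using inside assms(1) by fastforce
  then have "finite A" using assms(2) by (rule finite_subset)
  have disjoint: "{a..<a + m} \<inter> {b..<b + m} = {}" if "a \<in> A" "b \<in> A" "a \<noteq> b" for a b
  proof -
    have "x - x mod m = a" "x - x mod m = b" if "x \<in> {a..<a + m} \<inter> {b..<b + m}" for x
      using that mem_aligned_block_iff[OF assms(1) aligned[OF \<open>a \<in> A\<close>], of x]
        mem_aligned_block_iff[OF assms(1) aligned[OF \<open>b \<in> A\<close>], of x] by simp_all
    then show ?thesis using \<open>a \<noteq> b\<close> by blast
  qed
  have "card A * m = (\<Sum>a\<in>A. card {a..<a + m})" by simp
  also have "\<dots> = card (\<Union>a\<in>A. {a..<a + m})"
    using \<open>finite A\<close> disjoint by (intro card_UN_disjoint[symmetric]) auto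
  also have "\<dots> \<le> card S"
    using inside assms(2) by (intro card_mono) auto
  finally show ?thesis .
qed

lemma card_aligned_blocks_inside_interval_le:
  fixes m s e :: nat and A :: "nat set"
  assumes "0 < m" "\<And>a. a \<in> A \<Longrightarrow> m dvd a \<and> {a..<a + m} \<subseteq> {s..<e}"
  shows "card A \<le> (e - s) div m"
proof -
  have "card A * m \<le> card {s..<e}"
    using assms(2) by (intro card_aligned_blocks_mult_le[OF assms(1) finite_atLeastLessThan]) blast+
  then show ?thesis
    unfolding card_atLeastLessThan less_eq_div_iff_mult_less_eq[OF assms(1)] .
qed

lemma card_children_inside_partial_block:
  fixes m M p s e :: nat
  assumes "0 < m" "m dvd M"
  shows "card {a. m dvd a \<and> {a..<a + m} \<subseteq> {p..<p + M} \<inter> {s..<e}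
                \<and> \<not> {p..<p + M} \<subseteq> {s..<e}} \<le> M div m - 1"
proof (cases "{p..<p + M} \<subseteq> {s..<e}")
  case False
  let ?C = "{a. m dvd a \<and> {a..<a + m} \<subseteq> {p..<p + M} \<inter> {s..<e}}"
  have "{p..<p + M} \<inter> {s..<e} \<subset> {p..<p + M}" using False by blast
  then have "card ({p..<p + M} \<inter> {s..<e}) < card {p..<p + M}"
    by (rule psubset_card_mono[OF finite_atLeastLessThan])
  moreover have "card ?C * m \<le> card ({p..<p + M} \<inter> {s..<e})"
    by (rule card_aligned_blocks_mult_le[OF assms(1)]) blast+
  ultimately have "card ?C * m < M div m * m"
    using assms(2) by (simp only: card_atLeastLessThan add_diff_cancel_left' dvd_div_mult_self)
  then have "card ?C < M div m" by (rule mult_less_cancel2[THEN iffD1, THEN conjunct2])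
  moreover have "{a. m dvd a \<and> {a..<a + m} \<subseteq> {p..<p + M} \<inter> {s..<e}
                    \<and> \<not> {p..<p + M} \<subseteq> {s..<e}} = ?C"
    using False by blast
  ultimately show ?thesis by simp
qed simp

lemma aligned_block_crossing_boundary:
  fixes M p a s e :: nat
  assumes "0 < M" "M dvd p"
    and "a \<in> {p..<p + M} \<inter> {s..<e}" and "\<not> {p..<p + M} \<subseteq> {s..<e}"
  shows "p = s - s mod M \<or> p = (e - 1) - (e - 1) mod M"
proof -
  from assms(4) obtain y where "y \<in> {p..<p + M}" "y \<notin> {s..<e}" by blast
  then have "s \<in> {p..<p + M} \<or> e - 1 \<in> {p..<p + M}"
    using assms(3) unfolding Int_iff atLeastLessThan_iff by linarith
  then show ?thesis
  proof
    assume "s \<in> {p..<p + M}"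
    then show ?thesis using mem_aligned_block_iff[OF assms(1,2), of s] by simp
  next
    assume "e - 1 \<in> {p..<p + M}"
    then show ?thesis using mem_aligned_block_iff[OF assms(1,2), of "e - 1"] by simp
  qed
qed

lemma aligned_subblock_end_le:
  fixes m M a :: nat
  assumes "0 < M" "m dvd M" "m dvd a"
  shows "a + m \<le> a - a mod M + M"
proof -
  have "m dvd M - a mod M"
    using assms by (simp add: dvd_mod)
  moreover have "0 < M - a mod M" using assms(1) by simp
  ultimately have "m \<le> M - a mod M" by (rule dvd_imp_le)
  then show ?thesis using mod_less_eq_dividend[of a M] mod_less_divisor[OF assms(1), of a]
    by linarith
qed

lemma hierarchy_length_ge_1: "hierarchy ms \<Longrightarrow> 1 \<le> length ms"
  unfolding hierarchy_def by (metis One_nat_def Suc_leI length_greater_0_conv)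

lemma hierarchy_meas_pos: "hierarchy ms \<Longrightarrow> 1 \<le> i \<Longrightarrow> i \<le> length ms \<Longrightarrow> 0 < meas ms i"
  by (auto simp: hierarchy_def)

lemma hierarchy_meas_dvd:
  "hierarchy ms \<Longrightarrow> 2 \<le> i \<Longrightarrow> i \<le> length ms \<Longrightarrow> meas ms i dvd meas ms (i - 1)"
  by (auto simp: hierarchy_def)

definition H_level :: "nat list \<Rightarrow> nat \<Rightarrow> nat \<Rightarrow> nat \<Rightarrow> nat set" where
  "H_level ms s e i = {a. (i, a) \<in> H ms s e}"

lemma mem_H_level_iff:
  "a \<in> H_level ms s e i \<longleftrightarrow> is_block ms i a \<and> block ms i a \<subseteq> {s..<e}
     \<and> (i = 1 \<or> \<not> block ms (i - 1) (parent_start ms i a) \<subseteq> {s..<e})"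
  by (simp add: H_level_def H_def)

lemma card_H_eq_sum_H_level:
  "card (H ms s e) = (\<Sum>i = 1..length ms. card (H_level ms s e i))"
proof -
  have "H ms s e = (SIGMA i:{1..length ms}. H_level ms s e i)"
    by (auto simp: H_def H_level_def is_block_def)
  moreover have "finite (H_level ms s e i)" for i
    by (rule finite_subset[of _ "{..1440}"]) (auto simp: H_level_def H_def is_block_def)
  ultimately show ?thesis by simp
qed

lemma card_H_level_1_le:
  assumes "hierarchy ms"
  shows "card (H_level ms s e 1) \<le> (e - s) div meas ms 1"
proof (rule card_aligned_blocks_inside_interval_le)
  show "0 < meas ms 1"
    using hierarchy_meas_pos[OF assms order_refl hierarchy_length_ge_1[OF assms]] .
  fix a assume "a \<in> H_level ms s e 1"
  then show "meas ms 1 dvd a \<and> {a..<a + meas ms 1} \<subseteq> {s..<e}"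
    unfolding mem_H_level_iff is_block_def block_def by blast
qed

lemma card_H_level_le:
  assumes "hierarchy ms" "2 \<le> i" "i \<le> length ms"
  shows "card (H_level ms s e i) \<le> 2 * (meas ms (i - 1) div meas ms i - 1)"
proof -
  define m M where "m = meas ms i" and "M = meas ms (i - 1)"
  have "0 < m" "0 < M" "m dvd M"
    using hierarchy_meas_pos[OF assms(1), of i] hierarchy_meas_pos[OF assms(1), of "i - 1"]
      hierarchy_meas_dvd[OF assms] assms(2,3) unfolding m_def M_def by simp_all
  define children where "children p = {a. m dvd a \<and> {a..<a + m} \<subseteq> {p..<p + M} \<inter> {s..<e}
      \<and> \<not> {p..<p + M} \<subseteq> {s..<e}}" for p
  have "H_level ms s e i \<subseteq> children (s - s mod M) \<union> children ((e - 1) - (e - 1) mod M)"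
  proof
    fix a assume "a \<in> H_level ms s e i"
    moreover define p where "p = a - a mod M"
    ultimately have "m dvd a" and inside: "{a..<a + m} \<subseteq> {s..<e}"
      and partial: "\<not> {p..<p + M} \<subseteq> {s..<e}"
      using assms(2) unfolding mem_H_level_iff is_block_def block_def parent_start_def
        m_def M_def p_def by auto
    have "M dvd p" unfolding p_def by (simp add: minus_mod_eq_mult_div)
    have "a + m \<le> p + M"
      using aligned_subblock_end_le[OF \<open>0 < M\<close> \<open>m dvd M\<close> \<open>m dvd a\<close>] unfolding p_def .
    then have "{a..<a + m} \<subseteq> {p..<p + M}" unfolding p_def by (intro ivl_subset[THEN iffD2]) simp
    moreover have "a \<in> {a..<a + m}" using \<open>0 < m\<close> by simp
    ultimately have "a \<in> {p..<p + M} \<inter> {s..<e}" using inside by blast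
    then have "p = s - s mod M \<or> p = (e - 1) - (e - 1) mod M"
      using aligned_block_crossing_boundary[OF \<open>0 < M\<close> \<open>M dvd p\<close> _ partial] by blast
    moreover have "a \<in> children p"
      using \<open>m dvd a\<close> inside partial \<open>{a..<a + m} \<subseteq> {p..<p + M}\<close>
      unfolding children_def by blast
    ultimately show "a \<in> children (s - s mod M) \<union> children ((e - 1) - (e - 1) mod M)"
      by blast
  qed
  moreover have "finite (children p)" for p
  proof (rule finite_subset)
    show "children p \<subseteq> {p..<p + M}"
      using \<open>0 < m\<close> unfolding children_def by fastforce
  qed simp
  ultimately have "card (H_level ms s e i)
      \<le> card (children (s - s mod M)) + card (children ((e - 1) - (e - 1) mod M))"
    by (meson card_Un_le card_mono finite_UnI le_trans)
  also have "\<dots> \<le> 2 * (M div m - 1)"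
    unfolding children_def mult_2
    by (intro add_mono card_children_inside_partial_block[OF \<open>0 < m\<close> \<open>m dvd M\<close>])
  finally show ?thesis unfolding m_def M_def .
qed

lemma Bconst_timehash: "Bconst [240, 60, 15, 5, 1] = 24"
proof -
  have "{2..5} = {2, 3, 4, 5 :: nat}" by auto
  then show ?thesis by (simp add: Bconst_def meas_def)
qed

theorem mainTheorem3:
  fixes ms :: "nat list" and s e :: nat
  assumes "hierarchy ms" and "s < e" and "e \<le> 1440"
  shows "card (H ms s e) \<le> (e - s) div meas ms 1 + 1 + Bconst ms
         \<and> Bconst [240, 60, 15, 5, 1] = 24"
proof -
  have "card (H ms s e)
      = card (H_level ms s e 1) + (\<Sum>i = 2..length ms. card (H_level ms s e i))"
    using card_H_eq_sum_H_level hierarchy_length_ge_1[OF assms(1)]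
    by (simp add: sum.atLeast_Suc_atMost numeral_2_eq_2)
  also have "\<dots> \<le> (e - s) div meas ms 1
      + (\<Sum>i = 2..length ms. 2 * (meas ms (i - 1) div meas ms i - 1))"
    using card_H_level_1_le[OF assms(1)] card_H_level_le[OF assms(1)]
    by (intro add_mono sum_mono) auto
  also have "\<dots> = (e - s) div meas ms 1 + Bconst ms"
    by (simp add: Bconst_def sum_distrib_left)
  finally show ?thesis using Bconst_timehash by simp
qed

end
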